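(* There are $\lambda<1$ and $A,B\ge0$ such that for each $f\in L^1_2(\mathbb{R}^d)$ and $m,n\ge1$, $$\|\mathcal{L}_{t,n}^mf\|_{L^1_2}\le A\lambda^m\|f\|_{L^1_2}+B\|f\|_{L^1}.$$
   Context: Consider on $\mathbb{R}^d$ the SDE $dX_t=b(X_t)dt+dW_t$, $X_0=x$, with $W$ a standard Brownian motion, $b$ Lipschitz continuous, and $\langle b(x),x\rangle\le R_1-R_2\|x\|^2$ for constants $R_1\in\mathbb{R}$, $R_2>0$. Fix $t>0$; $S_t(x,y)$ is the transition density and $(\mathcal{L}_tf)(y):=\int S_t(x,y)f(x)\,dx$. Fix $x_0\in\mathbb{R}^d$ and a real sequence $u_n\to+\infty$; $B_n:=B(x_0,e^{-u_n})$ and $(\mathcal{L}_{t,n}f)(x):=1_{B_n^c}(x)(\mathcal{L}_tf)(x)$. $\|f\|_{L^1_2}:=\int(1+|x|^2)|f|\,dx$. *)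

theory Defs
  imports "HOL-Probability.Probability"
begin

definition gauss_density :: "real \<Rightarrow> 'a::euclidean_space \<Rightarrow> real" where
  "gauss_density s z = (2 * pi * s) powr (- real DIM('a) / 2) * exp (- (norm z)\<^sup>2 / (2 * s))"

definition brownian_motion :: "'b measure \<Rightarrow> (real \<Rightarrow> 'b \<Rightarrow> 'a::euclidean_space) \<Rightarrow> bool" where
  "brownian_motion M W \<longleftrightarrow> prob_space M \<and>
     (\<forall>t. W t \<in> borel_measurable M) \<and>
     (\<forall>\<omega>\<in>space M. W 0 \<omega> = 0 \<and> continuous_on {0..} (\<lambda>t. W t \<omega>)) \<and>
     (\<forall>s t. 0 \<le> s \<and> s < t \<longrightarrow>
        distributed M lborel (\<lambda>\<omega>. W t \<omega> - W s \<omega>) (\<lambda>z. ennreal (gauss_density (t - s) z))) \<and>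
     (\<forall>ts :: real list. sorted ts \<and> (\<forall>s\<in>set ts. 0 \<le> s) \<longrightarrow>
        prob_space.indep_vars M (\<lambda>_. borel) (\<lambda>i \<omega>. W (ts ! Suc i) \<omega> - W (ts ! i) \<omega>) {..<length ts - 1})"

text \<open>X solves dX = b(X) dt + dW, X_0 = x (pathwise integral form; the noise is additive).\<close>
definition sde_solution :: "'b measure \<Rightarrow> (real \<Rightarrow> 'b \<Rightarrow> 'a::euclidean_space) \<Rightarrow> ('a \<Rightarrow> 'a) \<Rightarrow> 'a
    \<Rightarrow> (real \<Rightarrow> 'b \<Rightarrow> 'a) \<Rightarrow> bool" where
  "sde_solution M W b x X \<longleftrightarrow>
     (\<forall>\<omega>\<in>space M. continuous_on {0..} (\<lambda>t. X t \<omega>) \<and>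
        (\<forall>t\<ge>0. X t \<omega> = x + integral {0..t} (\<lambda>s. b (X s \<omega>)) + W t \<omega>))"

definition transfer_op :: "('a::euclidean_space \<Rightarrow> 'a \<Rightarrow> real) \<Rightarrow> ('a \<Rightarrow> real) \<Rightarrow> 'a \<Rightarrow> real" where
  "transfer_op S f y = (\<integral>x. S x y * f x \<partial>lborel)"

definition open_op :: "('a::euclidean_space \<Rightarrow> 'a \<Rightarrow> real) \<Rightarrow> 'a \<Rightarrow> (nat \<Rightarrow> real) \<Rightarrow> nat
    \<Rightarrow> ('a \<Rightarrow> real) \<Rightarrow> 'a \<Rightarrow> real" where
  "open_op S x0 u n f x = indicator (- ball x0 (exp (- u n))) x * transfer_op S f x"

definition L12_norm :: "('a::euclidean_space \<Rightarrow> real) \<Rightarrow> ennreal" where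
  "L12_norm f = (\<integral>\<^sup>+x. ennreal ((1 + (norm x)\<^sup>2) * \<bar>f x\<bar>) \<partial>lborel)"

definition L1_norm :: "('a::euclidean_space \<Rightarrow> real) \<Rightarrow> ennreal" where
  "L1_norm f = (\<integral>\<^sup>+x. ennreal \<bar>f x\<bar> \<partial>lborel)"

end

theory Submission
  imports Defs
begin

(*
  Since the indicator of the complement of B_n is at most 1, the iterates of the open operator
  are dominated pointwise by those of the positive kernel operator T h (y) = \<integral> S(x,y) h(x) dx
  acting on |f|.  T preserves
  mass, and by Tonelli it inherits from the kernel a Lyapunov drift condition
  \<integral> S(x,y) (1 + |y|^2) dy \<le> a (1 + |x|^2) + c with a < 1, which iterates to the claim with
  lam = a, A = 1 and B = c / (1 - a).

  The drift condition is a second moment bound for the SDE.  Y = X - W solves the random ODE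
  Y' = b(Y + W), and dissipativity gives d/ds |Y|^2 \<le> -(R2/2) |Y|^2 + K1 + K2 |W|^2 for some
  constants K1, K2, hence |Y_t|^2 \<le> exp(-R2 t/2) |x|^2 + \<integral>_0^t (K1 + K2 |W_r|^2) dr; the Gaussian
  second moments of W then bound E (1 + |X_t|^2).  Picard iteration provides a solution for
  every starting point, so that S(x, \<cdot>) is a probability density.
*)

section \<open>Positive kernel operators\<close>

definition nn_transfer_op :: "('a::euclidean_space \<Rightarrow> 'a \<Rightarrow> real) \<Rightarrow> ('a \<Rightarrow> ennreal) \<Rightarrow> 'a \<Rightarrow> ennreal" where
  "nn_transfer_op S h y = (\<integral>\<^sup>+x. ennreal (S x y) * h x \<partial>lborel)"

lemma borel_measurable_nn_transfer_op:
  fixes S :: "'a::euclidean_space \<Rightarrow> 'a \<Rightarrow> real"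
  assumes S: "(\<lambda>(x, y). S x y) \<in> borel_measurable borel" and h: "h \<in> borel_measurable borel"
  shows "nn_transfer_op S h \<in> borel_measurable borel"
proof -
  have "(\<lambda>(x, y). S x y) \<in> borel_measurable (lborel \<Otimes>\<^sub>M lborel)"
    using S by (simp add: lborel_prod)
  then have "(\<lambda>p. S (snd p) (fst p)) \<in> borel_measurable (lborel \<Otimes>\<^sub>M lborel)"
    using measurable_compose[OF measurable_pair_swap'] by (simp add: case_prod_beta)
  then have "(\<lambda>(y, x). ennreal (S x y) * h x) \<in> borel_measurable (lborel \<Otimes>\<^sub>M lborel)"
    using h by (simp add: case_prod_beta) measurable
  then show ?thesis
    unfolding nn_transfer_op_def[abs_def] by (simp add: lborel.borel_measurable_nn_integral)
qed

lemma borel_measurable_nn_transfer_op_power: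
  fixes S :: "'a::euclidean_space \<Rightarrow> 'a \<Rightarrow> real"
  assumes S: "(\<lambda>(x, y). S x y) \<in> borel_measurable borel" and h: "h \<in> borel_measurable borel"
  shows "(nn_transfer_op S ^^ k) h \<in> borel_measurable borel"
  by (induction k) (simp_all add: h borel_measurable_nn_transfer_op[OF S])

lemma nn_integral_nn_transfer_op_swap:
  fixes S :: "'a::euclidean_space \<Rightarrow> 'a \<Rightarrow> real"
  assumes S: "(\<lambda>(x, y). S x y) \<in> borel_measurable borel"
    and h: "h \<in> borel_measurable borel" and V: "V \<in> borel_measurable borel"
  shows "(\<integral>\<^sup>+y. V y * nn_transfer_op S h y \<partial>lborel)
           = (\<integral>\<^sup>+x. h x * (\<integral>\<^sup>+y. ennreal (S x y) * V y \<partial>lborel) \<partial>lborel)"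
proof -
  have S2: "(\<lambda>p. S (fst p) (snd p)) \<in> borel_measurable (lborel \<Otimes>\<^sub>M lborel)"
    using S by (simp add: lborel_prod case_prod_unfold)
  have [measurable]: "S x \<in> borel_measurable borel" "(\<lambda>x. S x y) \<in> borel_measurable borel" for x y
    using measurable_compose[OF measurable_Pair1' S2] measurable_compose[OF measurable_Pair2' S2] by auto
  note [measurable] = h V
  have "(\<integral>\<^sup>+y. V y * nn_transfer_op S h y \<partial>lborel)
      = (\<integral>\<^sup>+y. (\<integral>\<^sup>+x. V y * (ennreal (S x y) * h x) \<partial>lborel) \<partial>lborel)"
    unfolding nn_transfer_op_def by (intro nn_integral_cong nn_integral_cmult[symmetric]) measurable
  also have "\<dots> = (\<integral>\<^sup>+x. (\<integral>\<^sup>+y. V y * (ennreal (S x y) * h x) \<partial>lborel) \<partial>lborel)"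
    using S2 h V by (intro lborel_pair.Fubini') (simp add: case_prod_beta; measurable)
  also have "\<dots> = (\<integral>\<^sup>+x. h x * (\<integral>\<^sup>+y. ennreal (S x y) * V y \<partial>lborel) \<partial>lborel)"
    by (intro nn_integral_cong, subst nn_integral_cmult[symmetric]) (measurable, simp add: ac_simps)
  finally show ?thesis .
qed

lemma nn_integral_weighted_nn_transfer_op_le:
  fixes S :: "'a::euclidean_space \<Rightarrow> 'a \<Rightarrow> real"
  assumes S: "(\<lambda>(x, y). S x y) \<in> borel_measurable borel"
    and h: "h \<in> borel_measurable borel" and V: "V \<in> borel_measurable borel"
    and drift: "\<And>x. (\<integral>\<^sup>+y. ennreal (S x y) * V y \<partial>lborel) \<le> a * V x + c"
  shows "(\<integral>\<^sup>+y. V y * nn_transfer_op S h y \<partial>lborel)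
           \<le> a * (\<integral>\<^sup>+y. V y * h y \<partial>lborel) + c * (\<integral>\<^sup>+y. h y \<partial>lborel)"
proof -
  have "(\<integral>\<^sup>+y. V y * nn_transfer_op S h y \<partial>lborel)
      = (\<integral>\<^sup>+x. h x * (\<integral>\<^sup>+y. ennreal (S x y) * V y \<partial>lborel) \<partial>lborel)"
    by (rule nn_integral_nn_transfer_op_swap[OF S h V])
  also have "\<dots> \<le> (\<integral>\<^sup>+x. a * (V x * h x) + c * h x \<partial>lborel)"
  proof (rule nn_integral_mono)
    fix x
    have "h x * (\<integral>\<^sup>+y. ennreal (S x y) * V y \<partial>lborel) \<le> h x * (a * V x + c)"
      using drift by (rule mult_left_mono) simp
    then show "h x * (\<integral>\<^sup>+y. ennreal (S x y) * V y \<partial>lborel) \<le> a * (V x * h x) + c * h x"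
      by (simp add: distrib_left ac_simps)
  qed
  also have "\<dots> = a * (\<integral>\<^sup>+y. V y * h y \<partial>lborel) + c * (\<integral>\<^sup>+y. h y \<partial>lborel)"
    using h V by (simp add: nn_integral_add nn_integral_cmult)
  finally show ?thesis .
qed

lemma ennreal_linear_recurrence_le:
  fixes I :: "nat \<Rightarrow> ennreal"
  assumes step: "\<And>k. I (Suc k) \<le> ennreal a * I k + ennreal c * N"
    and a: "0 \<le> a" "a < 1" and c: "0 \<le> c"
  shows "I k \<le> ennreal (a ^ k) * I 0 + ennreal (c / (1 - a)) * N"
proof (induction k)
  case (Suc k)
  have "I (Suc k) \<le> ennreal a * (ennreal (a ^ k) * I 0 + ennreal (c / (1 - a)) * N) + ennreal c * N"
    using step[of k] Suc by (meson add_right_mono mult_left_mono order_trans zero_le)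
  also have "\<dots> = ennreal (a ^ Suc k) * I 0 + ennreal (a * (c / (1 - a)) + c) * N"
  proof -
    have "ennreal (a * (c / (1 - a)) + c) = ennreal a * ennreal (c / (1 - a)) + ennreal c"
      using a c by (simp add: ennreal_mult[symmetric] ennreal_plus[symmetric] del: ennreal_plus)
    moreover have "ennreal (a ^ Suc k) = ennreal a * ennreal (a ^ k)"
      using a by (simp add: ennreal_mult)
    ultimately show ?thesis
      by (simp add: distrib_left distrib_right mult.assoc add.assoc)
  qed
  also have "a * (c / (1 - a)) + c = c / (1 - a)"
    using a by (simp add: field_simps)
  finally show ?case .
qed simp

lemma nn_integral_nn_transfer_op_power_le:
  fixes S :: "'a::euclidean_space \<Rightarrow> 'a \<Rightarrow> real"
  assumes S: "(\<lambda>(x, y). S x y) \<in> borel_measurable borel"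
    and mass: "\<And>x. (\<integral>\<^sup>+y. ennreal (S x y) \<partial>lborel) \<le> 1" and h: "h \<in> borel_measurable borel"
  shows "(\<integral>\<^sup>+y. (nn_transfer_op S ^^ k) h y \<partial>lborel) \<le> (\<integral>\<^sup>+y. h y \<partial>lborel)"
proof (induction k)
  case (Suc k)
  \<comment> \<open>the drift estimate with V = 1, a = 1 and c = 0\<close>
  have "(\<integral>\<^sup>+y. 1 * (nn_transfer_op S ^^ Suc k) h y \<partial>lborel)
      \<le> 1 * (\<integral>\<^sup>+y. 1 * (nn_transfer_op S ^^ k) h y \<partial>lborel) + 0 * (\<integral>\<^sup>+y. (nn_transfer_op S ^^ k) h y \<partial>lborel)"
    using mass by (simp only: funpow.simps comp_def)
      (intro nn_integral_weighted_nn_transfer_op_le[OF S] borel_measurable_nn_transfer_op_power[OF S h]; simp)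
  with Suc show ?case
    by simp
qed simp

lemma abs_open_op_power_le:
  fixes S :: "'a::euclidean_space \<Rightarrow> 'a \<Rightarrow> real"
  assumes S_nonneg: "\<And>x y. 0 \<le> S x y"
  shows "ennreal \<bar>(open_op S x0 u n ^^ k) f y\<bar> \<le> (nn_transfer_op S ^^ k) (\<lambda>x. ennreal \<bar>f x\<bar>) y"
proof (induction k arbitrary: y)
  case (Suc k)
  define g where "g = (open_op S x0 u n ^^ k) f"
  have "ennreal \<bar>open_op S x0 u n g y\<bar> \<le> ennreal \<bar>transfer_op S g y\<bar>"
    unfolding open_op_def by (intro ennreal_leI) (auto simp: indicator_def)
  also have "\<dots> \<le> (\<integral>\<^sup>+x. ennreal (norm (S x y * g x)) \<partial>lborel)"
    unfolding transfer_op_def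
    by (cases "integrable lborel (\<lambda>x. S x y * g x)")
       (use integral_norm_bound_ennreal[of lborel "\<lambda>x. S x y * g x"] in
         \<open>simp_all add: not_integrable_integral_eq\<close>)
  also have "\<dots> = (\<integral>\<^sup>+x. ennreal (S x y) * ennreal \<bar>g x\<bar> \<partial>lborel)"
    using S_nonneg by (intro nn_integral_cong) (simp add: abs_mult ennreal_mult)
  also have "\<dots> \<le> (\<integral>\<^sup>+x. ennreal (S x y) * (nn_transfer_op S ^^ k) (\<lambda>x. ennreal \<bar>f x\<bar>) x \<partial>lborel)"
    by (intro nn_integral_mono mult_left_mono) (auto simp: g_def Suc.IH)
  finally show ?case
    by (simp add: g_def nn_transfer_op_def[of S _ y])
qed simp

lemma L12_norm_open_op_power_le:
  fixes S :: "'a::euclidean_space \<Rightarrow> 'a \<Rightarrow> real"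
  assumes S: "(\<lambda>(x, y). S x y) \<in> borel_measurable borel" and S_nonneg: "\<And>x y. 0 \<le> S x y"
    and mass: "\<And>x. (\<integral>\<^sup>+y. ennreal (S x y) \<partial>lborel) \<le> 1"
    and drift: "\<And>x. (\<integral>\<^sup>+y. ennreal (S x y) * ennreal (1 + (norm y)\<^sup>2) \<partial>lborel)
                      \<le> ennreal a * ennreal (1 + (norm x)\<^sup>2) + ennreal c"
    and a: "0 \<le> a" "a < 1" and c: "0 \<le> c"
    and f: "f \<in> borel_measurable borel"
  shows "L12_norm ((open_op S x0 u n ^^ m) f)
           \<le> ennreal (a ^ m) * L12_norm f + ennreal (c / (1 - a)) * L1_norm f"
proof -
  define h where "h k = (nn_transfer_op S ^^ k) (\<lambda>x. ennreal \<bar>f x\<bar>)" for k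
  define V :: "'a \<Rightarrow> ennreal" where "V y = ennreal (1 + (norm y)\<^sup>2)" for y
  have h_meas: "h k \<in> borel_measurable borel" for k
    unfolding h_def using f by (intro borel_measurable_nn_transfer_op_power[OF S]) measurable
  have V_meas: "V \<in> borel_measurable borel"
    unfolding V_def by measurable
  have h_mass: "(\<integral>\<^sup>+y. h k y \<partial>lborel) \<le> L1_norm f" for k
    unfolding h_def L1_norm_def using f by (intro nn_integral_nn_transfer_op_power_le[OF S mass]) measurable
  have "L12_norm ((open_op S x0 u n ^^ m) f) \<le> (\<integral>\<^sup>+y. V y * h m y \<partial>lborel)"
    unfolding L12_norm_def V_def h_def
    by (intro nn_integral_mono) (simp add: ennreal_mult mult_left_mono abs_open_op_power_le[OF S_nonneg])
  also have "\<dots> \<le> ennreal (a ^ m) * (\<integral>\<^sup>+y. V y * h 0 y \<partial>lborel) + ennreal (c / (1 - a)) * L1_norm f"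
  proof (rule ennreal_linear_recurrence_le[OF _ a c])
    fix k
    have "(\<integral>\<^sup>+y. V y * h (Suc k) y \<partial>lborel)
            \<le> ennreal a * (\<integral>\<^sup>+y. V y * h k y \<partial>lborel) + ennreal c * (\<integral>\<^sup>+y. h k y \<partial>lborel)"
      unfolding h_def funpow.simps comp_def
      using drift h_meas[unfolded h_def] V_meas
      by (intro nn_integral_weighted_nn_transfer_op_le[OF S]) (simp_all add: V_def)
    also have "\<dots> \<le> ennreal a * (\<integral>\<^sup>+y. V y * h k y \<partial>lborel) + ennreal c * L1_norm f"
      by (intro add_left_mono mult_left_mono h_mass) simp
    finally show "(\<integral>\<^sup>+y. V y * h (Suc k) y \<partial>lborel)
                    \<le> ennreal a * (\<integral>\<^sup>+y. V y * h k y \<partial>lborel) + ennreal c * L1_norm f" .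
  qed
  also have "(\<integral>\<^sup>+y. V y * h 0 y \<partial>lborel) = L12_norm f"
    unfolding L12_norm_def V_def h_def by (intro nn_integral_cong) (simp add: ennreal_mult)
  finally show ?thesis .
qed

section \<open>Integral equations driven by a continuous path\<close>

lemma continuous_on_atLeast_if_intervals:
  fixes f :: "real \<Rightarrow> 'a::topological_space"
  assumes "\<And>T. T \<ge> a \<Longrightarrow> continuous_on {a..T} f"
  shows "continuous_on {a..} f"
  unfolding continuous_on_eq_continuous_within
proof (intro ballI)
  fix s assume s: "s \<in> {a..}"
  have "continuous (at s within {a..s + 1}) f"
    using assms[of "s + 1"] s by (simp add: continuous_on_eq_continuous_within)
  moreover have "at s within {a..s + 1} = at s within {a..}"
    by (rule at_within_nhd[where S = "{s - 1<..<s + 1}"]) auto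
  ultimately show "continuous (at s within {a..}) f"
    by simp
qed

definition picard_step :: "('a::euclidean_space \<Rightarrow> 'a) \<Rightarrow> (real \<Rightarrow> 'a) \<Rightarrow> 'a \<Rightarrow> (real \<Rightarrow> 'a) \<Rightarrow> real \<Rightarrow> 'a" where
  "picard_step b w x Q s = x + integral {0..s} (\<lambda>r. b (Q r + w r))"

lemma integrable_on_picard_integrand:
  fixes b :: "'a::euclidean_space \<Rightarrow> 'a" and w Q :: "real \<Rightarrow> 'a"
  assumes "continuous_on UNIV b" "continuous_on {0..} w" "continuous_on {0..} Q"
  shows "(\<lambda>r. b (Q r + w r)) integrable_on {0..s}"
proof -
  have "continuous_on {0..} (\<lambda>r. b (Q r + w r))"
    by (intro continuous_on_compose2[OF assms(1)] continuous_on_add assms(2,3)) auto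
  then show ?thesis
    by (intro integrable_continuous_interval) (auto elim: continuous_on_subset)
qed

lemma continuous_on_picard_step:
  fixes b :: "'a::euclidean_space \<Rightarrow> 'a" and w Q :: "real \<Rightarrow> 'a"
  assumes b: "continuous_on UNIV b" and w: "continuous_on {0..} w" and Q: "continuous_on {0..} Q"
  shows "continuous_on {0..} (picard_step b w x Q)"
  unfolding picard_step_def
proof (intro continuous_on_add continuous_on_const continuous_on_atLeast_if_intervals)
  fix T :: real
  show "continuous_on {0..T} (\<lambda>s. integral {0..s} (\<lambda>r. b (Q r + w r)))"
    by (intro indefinite_integral_continuous_1 integrable_on_picard_integrand b w Q)
qed

lemma norm_picard_step_diff_le:
  fixes b :: "'a::euclidean_space \<Rightarrow> 'a" and w Q1 Q2 :: "real \<Rightarrow> 'a"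
  assumes lip: "L-lipschitz_on UNIV b" and w: "continuous_on {0..} w"
    and Q1: "continuous_on {0..} Q1" and Q2: "continuous_on {0..} Q2"
    and g: "\<And>r. r \<in> {0..s} \<Longrightarrow> norm (Q1 r - Q2 r) \<le> g r"
    and g_int: "(\<lambda>r. L * g r) integrable_on {0..s}"
  shows "norm (picard_step b w x Q1 s - picard_step b w x Q2 s) \<le> integral {0..s} (\<lambda>r. L * g r)"
proof -
  have b: "continuous_on UNIV b"
    using lip by (rule lipschitz_on_continuous_on)
  have "norm (picard_step b w x Q1 s - picard_step b w x Q2 s)
      = norm (integral {0..s} (\<lambda>r. b (Q1 r + w r) - b (Q2 r + w r)))"
    unfolding picard_step_def
    by (simp add: integral_diff integrable_on_picard_integrand[OF b w Q1] integrable_on_picard_integrand[OF b w Q2])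
  also have "\<dots> \<le> integral {0..s} (\<lambda>r. L * g r)"
  proof (rule integral_norm_bound_integral)
    fix r assume r: "r \<in> {0..s}"
    have "norm (b (Q1 r + w r) - b (Q2 r + w r)) \<le> L * norm (Q1 r - Q2 r)"
      using lipschitz_onD[OF lip, of "Q1 r + w r" "Q2 r + w r"] by (simp add: dist_norm)
    also have "\<dots> \<le> L * g r"
      using g[OF r] lipschitz_on_nonneg[OF lip] by (rule mult_left_mono)
    finally show "norm (b (Q1 r + w r) - b (Q2 r + w r)) \<le> L * g r" .
  qed (use integrable_on_picard_integrand[OF b w Q1] integrable_on_picard_integrand[OF b w Q2] g_int in
         \<open>auto intro: integrable_diff\<close>)
  finally show ?thesis .
qed

lemma has_integral_exp_series_term:
  fixes M L :: real
  assumes "0 \<le> s"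
  shows "((\<lambda>r. L * (M * (L * r) ^ k / fact k)) has_integral M * (L * s) ^ Suc k / fact (Suc k)) {0..s}"
proof -
  define c where "c = M * L ^ Suc k / fact (Suc k)"
  have "((\<lambda>r. c * r ^ Suc k) has_real_derivative c * (real (Suc k) * r ^ k)) (at r within {0..s})" for r
    by (rule DERIV_cmult) (use DERIV_pow[of "Suc k" r "{0..s}"] in simp)
  moreover have "c * (real (Suc k) * r ^ k) = L * (M * (L * r) ^ k / fact k)" for r
    unfolding c_def fact_Suc by (simp add: power_mult_distrib field_simps del: of_nat_Suc)
  moreover have "c * s ^ Suc k = M * (L * s) ^ Suc k / fact (Suc k)"
    by (simp add: c_def power_mult_distrib)
  ultimately show ?thesis
    using fundamental_theorem_of_calculus[OF assms, of "\<lambda>r. c * r ^ Suc k"]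
    by (simp add: has_real_derivative_iff_has_vector_derivative)
qed

lemma continuous_on_picard_iterates:
  fixes b :: "'a::euclidean_space \<Rightarrow> 'a" and w :: "real \<Rightarrow> 'a"
  assumes "continuous_on UNIV b" "continuous_on {0..} w"
  shows "continuous_on {0..} ((picard_step b w x ^^ k) (\<lambda>_. x))"
  by (induction k) (simp_all add: continuous_on_picard_step assms)

lemma norm_picard_iterates_diff_le:
  fixes b :: "'a::euclidean_space \<Rightarrow> 'a" and w :: "real \<Rightarrow> 'a"
  assumes lip: "L-lipschitz_on UNIV b" and w: "continuous_on {0..} w"
    and M: "\<And>s. s \<in> {0..T} \<Longrightarrow> norm (picard_step b w x (\<lambda>_. x) s - x) \<le> M"
    and s: "s \<in> {0..T}"
  shows "norm ((picard_step b w x ^^ Suc k) (\<lambda>_. x) s - (picard_step b w x ^^ k) (\<lambda>_. x) s)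
           \<le> M * (L * s) ^ k / fact k"
  using s
proof (induction k arbitrary: s)
  case (Suc k)
  have b: "continuous_on UNIV b"
    using lip by (rule lipschitz_on_continuous_on)
  have int: "((\<lambda>r. L * (M * (L * r) ^ k / fact k)) has_integral M * (L * s) ^ Suc k / fact (Suc k)) {0..s}"
    using Suc.prems by (intro has_integral_exp_series_term) auto
  have "norm ((picard_step b w x ^^ Suc (Suc k)) (\<lambda>_. x) s - (picard_step b w x ^^ Suc k) (\<lambda>_. x) s)
      \<le> integral {0..s} (\<lambda>r. L * (M * (L * r) ^ k / fact k))"
    using Suc int by (simp only: funpow.simps comp_def)
      (intro norm_picard_step_diff_le[OF lip w] continuous_on_picard_step continuous_on_picard_iterates b w; auto)
  also have "\<dots> = M * (L * s) ^ Suc k / fact (Suc k)"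
    using int by (rule integral_unique)
  finally show ?case .
qed (use M in simp)

lemma uniform_limit_picard_step:
  fixes b :: "'a::euclidean_space \<Rightarrow> 'a" and w :: "real \<Rightarrow> 'a"
  assumes lip: "L-lipschitz_on UNIV b" and w: "continuous_on {0..} w"
    and Q: "\<And>n. continuous_on {0..} (Q n)" "continuous_on {0..} Y"
    and lim: "uniform_limit {0..T} Q Y sequentially" and T: "0 \<le> T"
  shows "uniform_limit {0..T} (\<lambda>n. picard_step b w x (Q n)) (picard_step b w x Y) sequentially"
proof (rule uniform_limitI)
  fix e :: real assume e: "0 < e"
  have L: "0 \<le> L"
    using lip by (rule lipschitz_on_nonneg)
  define d where "d = e / (L * T + 1)"
  have d: "0 < d"
    using e L T by (simp add: d_def add_nonneg_pos)
  have "\<forall>\<^sub>F n in sequentially. \<forall>r\<in>{0..T}. dist (Q n r) (Y r) < d"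
    using d by (rule uniform_limitD[OF lim])
  then show "\<forall>\<^sub>F n in sequentially. \<forall>s\<in>{0..T}. dist (picard_step b w x (Q n) s) (picard_step b w x Y s) < e"
  proof (rule eventually_mono, intro ballI)
    fix n s assume close: "\<forall>r\<in>{0..T}. dist (Q n r) (Y r) < d" and s: "s \<in> {0..T}"
    have "dist (picard_step b w x (Q n) s) (picard_step b w x Y s) \<le> integral {0..s} (\<lambda>r. L * d)"
      unfolding dist_norm using close s
      by (intro norm_picard_step_diff_le[OF lip w Q]) (auto simp: dist_norm less_imp_le)
    also have "\<dots> = s * (L * d)"
      using s by simp
    also have "\<dots> \<le> T * (L * d)"
      using s L d by (intro mult_right_mono) auto
    also have "\<dots> = e * (L * T) / (L * T + 1)"
      by (simp add: d_def)
    also have "\<dots> < e"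
      using L e T by (simp add: divide_less_eq add_nonneg_pos)
    finally show "dist (picard_step b w x (Q n) s) (picard_step b w x Y s) < e" .
  qed
qed

lemma uniform_limit_picard_iterates:
  fixes b :: "'a::euclidean_space \<Rightarrow> 'a" and w :: "real \<Rightarrow> 'a"
  assumes lip: "L-lipschitz_on UNIV b" and w: "continuous_on {0..} w"
  obtains Y where "\<And>T. 0 \<le> T \<Longrightarrow> uniform_limit {0..T} (\<lambda>k. (picard_step b w x ^^ k) (\<lambda>_. x)) Y sequentially"
proof
  define P where "P k = (picard_step b w x ^^ k) (\<lambda>_. x)" for k
  fix T :: real assume T: "0 \<le> T"
  have b: "continuous_on UNIV b"
    using lip by (rule lipschitz_on_continuous_on)
  have L: "0 \<le> L"
    using lip by (rule lipschitz_on_nonneg)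
  have "compact ((\<lambda>s. picard_step b w x (\<lambda>_. x) s - x) ` {0..T})"
    by (intro compact_continuous_image continuous_on_diff continuous_on_const
        continuous_on_subset[OF continuous_on_picard_step[OF b w]]) auto
  then obtain M where M: "\<forall>s\<in>{0..T}. norm (picard_step b w x (\<lambda>_. x) s - x) \<le> M"
    by (auto dest!: compact_imp_bounded simp: bounded_iff)
  have M_nonneg: "0 \<le> M"
    using M T by (intro order_trans[OF norm_ge_zero]) auto
  have bound: "norm (P (Suc k) s - P k s) \<le> M * (L * T) ^ k / fact k" if s: "s \<in> {0..T}" for k s
  proof -
    have "norm (P (Suc k) s - P k s) \<le> M * (L * s) ^ k / fact k"
      unfolding P_def using M s by (intro norm_picard_iterates_diff_le[OF lip w]) auto
    also have "\<dots> \<le> M * (L * T) ^ k / fact k"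
      using s L M_nonneg by (intro divide_right_mono mult_left_mono power_mono mult_left_mono) auto
    finally show ?thesis .
  qed
  have "summable (\<lambda>k. M * (L * T) ^ k / fact k)"
    using summable_mult[OF summable_exp[of "L * T"], of M] by (simp add: field_simps)
  then have "uniform_limit {0..T} (\<lambda>n s. \<Sum>k<n. P (Suc k) s - P k s) (\<lambda>s. \<Sum>k. P (Suc k) s - P k s) sequentially"
    using bound by (intro Weierstrass_m_test) auto
  then have "uniform_limit {0..T} (\<lambda>n s. x + (\<Sum>k<n. P (Suc k) s - P k s))
               (\<lambda>s. x + (\<Sum>k. P (Suc k) s - P k s)) sequentially"
    by (intro uniform_limit_add uniform_limit_const)
  moreover have "x + (\<Sum>k<n. P (Suc k) s - P k s) = P n s" for n s
    using sum_lessThan_telescope[of "\<lambda>k. P k s" n] by (simp add: P_def)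
  ultimately show "uniform_limit {0..T} (\<lambda>k. (picard_step b w x ^^ k) (\<lambda>_. x))
                     (\<lambda>s. x + (\<Sum>k. P (Suc k) s - P k s)) sequentially"
    by (simp add: P_def)
qed

lemma integral_equation_solution_exists:
  fixes b :: "'a::euclidean_space \<Rightarrow> 'a" and w :: "real \<Rightarrow> 'a"
  assumes lip: "L-lipschitz_on UNIV b" and w: "continuous_on {0..} w"
  obtains Y where "continuous_on {0..} Y" "\<And>s. 0 \<le> s \<Longrightarrow> Y s = x + integral {0..s} (\<lambda>r. b (Y r + w r))"
proof -
  define P where "P k = (picard_step b w x ^^ k) (\<lambda>_. x)" for k
  have b: "continuous_on UNIV b"
    using lip by (rule lipschitz_on_continuous_on)
  have P: "continuous_on {0..} (P k)" for k
    unfolding P_def using b w by (rule continuous_on_picard_iterates)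
  obtain Y where lim: "\<And>T. 0 \<le> T \<Longrightarrow> uniform_limit {0..T} P Y sequentially"
    unfolding P_def using uniform_limit_picard_iterates[OF lip w] by blast
  have Y: "continuous_on {0..} Y"
    using P lim by (intro continuous_on_atLeast_if_intervals uniform_limit_theorem[OF _ lim])
      (auto intro!: always_eventually continuous_on_subset[OF P])
  have "Y s = picard_step b w x Y s" if s: "0 \<le> s" for s
  proof (rule LIMSEQ_unique)
    show "(\<lambda>n. P (Suc n) s) \<longlonglongrightarrow> Y s"
      using s by (intro LIMSEQ_Suc tendsto_uniform_limitI[OF lim[OF s]]) auto
    show "(\<lambda>n. P (Suc n) s) \<longlonglongrightarrow> picard_step b w x Y s"
      using tendsto_uniform_limitI[OF uniform_limit_picard_step[OF lip w P Y lim[OF s] s]] s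
      by (simp add: P_def)
  qed
  with Y show thesis
    unfolding picard_step_def by (rule that)
qed

section \<open>A Lyapunov estimate for the dissipative drift\<close>

lemma two_mult_le_weighted_squares:
  fixes p r e :: real
  assumes e: "0 < e"
  shows "2 * p * r \<le> e * p\<^sup>2 + r\<^sup>2 / e"
proof -
  have "0 \<le> (e * p - r)\<^sup>2 / e"
    using e by simp
  also have "(e * p - r)\<^sup>2 / e = e * p\<^sup>2 + r\<^sup>2 / e - 2 * p * r"
    using e by (simp add: power2_eq_square field_simps)
  finally show ?thesis
    by simp
qed

lemma norm_add_squared_le:
  fixes y v :: "'a::real_normed_vector"
  assumes e: "0 < e"
  shows "(norm (y + v))\<^sup>2 \<le> (1 + e) * (norm y)\<^sup>2 + (1 + 1 / e) * (norm v)\<^sup>2"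
proof -
  have "(norm (y + v))\<^sup>2 \<le> (norm y + norm v)\<^sup>2"
    by (intro power_mono norm_triangle_ineq) simp
  also have "\<dots> = (norm y)\<^sup>2 + (norm v)\<^sup>2 + 2 * norm y * norm v"
    by (simp add: power2_sum)
  also have "\<dots> \<le> (1 + e) * (norm y)\<^sup>2 + (1 + 1 / e) * (norm v)\<^sup>2"
    using two_mult_le_weighted_squares[OF e, of "norm y" "norm v"] by (simp add: algebra_simps)
  finally show ?thesis .
qed

lemma dissipative_inner_bound:
  fixes b :: "'a::real_inner \<Rightarrow> 'a"
  assumes lip: "L-lipschitz_on UNIV b"
    and dissip: "\<And>x. inner (b x) x \<le> R1 - R2 * (norm x)\<^sup>2" and R2: "0 < R2"
  shows "2 * inner (b x) (x - v) \<le> - (R2 / 2) * (norm (x - v))\<^sup>2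
           + (2 * \<bar>R1\<bar> + norm (b 0)) + (R2 + norm (b 0) + L\<^sup>2 / R2) * (norm v)\<^sup>2"
proof -
  define p where "p = norm x"
  define q where "q = norm v"
  define B0 where "B0 = norm (b 0)"
  have growth: "norm (b x) \<le> B0 + L * p"
    using norm_triangle_sub[of "b x" "b 0"] lipschitz_onD[OF lip, of x 0]
    by (simp add: B0_def p_def dist_norm)
  have "- inner (b x) v \<le> norm (b x) * q"
    using Cauchy_Schwarz_ineq2[of "b x" v] by (simp add: q_def)
  also have "\<dots> \<le> B0 * q + L * p * q"
    using growth by (metis distrib_right mult_right_mono norm_ge_zero q_def)
  finally have cross: "- inner (b x) v \<le> B0 * q + L * p * q" .
  have "2 * p * (L * q) \<le> R2 * p\<^sup>2 + (L * q)\<^sup>2 / R2"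
    using R2 by (rule two_mult_le_weighted_squares)
  then have Lpq: "2 * (L * p * q) \<le> R2 * p\<^sup>2 + L\<^sup>2 / R2 * q\<^sup>2"
    by (simp add: power_mult_distrib mult_ac)
  have "0 \<le> B0 * (q - 1)\<^sup>2"
    by (simp add: B0_def)
  then have B0q: "2 * (B0 * q) \<le> B0 + B0 * q\<^sup>2"
    by (simp add: power2_eq_square algebra_simps)
  have "(norm (x - v))\<^sup>2 \<le> 2 * p\<^sup>2 + 2 * q\<^sup>2"
    using norm_add_squared_le[of 1 x "- v"] by (simp add: p_def q_def)
  then have diff: "R2 / 2 * (norm (x - v))\<^sup>2 \<le> R2 * p\<^sup>2 + R2 * q\<^sup>2"
    using mult_left_mono[of _ _ "R2 / 2"] R2 by (fastforce simp: algebra_simps)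
  have "inner (b x) x \<le> R1 - R2 * p\<^sup>2"
    using dissip[of x] by (simp add: p_def)
  then show ?thesis
    using cross Lpq B0q diff abs_ge_self[of R1]
    by (simp add: inner_diff_right distrib_right B0_def q_def)
qed

lemma linear_differential_inequality:
  fixes Z Z' h :: "real \<Rightarrow> real"
  assumes t: "0 \<le> t" and c: "0 \<le> c"
    and Z: "continuous_on {0..t} Z" and h: "continuous_on {0..t} h"
    and h_nonneg: "\<And>r. r \<in> {0..t} \<Longrightarrow> 0 \<le> h r"
    and Z': "\<And>s. 0 < s \<Longrightarrow> s < t \<Longrightarrow> (Z has_real_derivative Z' s) (at s)"
    and ineq: "\<And>s. 0 < s \<Longrightarrow> s < t \<Longrightarrow> Z' s \<le> - c * Z s + h s"
  shows "Z t \<le> exp (- c * t) * Z 0 + integral {0..t} h"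
proof -
  have eh: "continuous_on {0..t} (\<lambda>r. exp (c * r) * h r)"
    by (intro continuous_intros h)
  define I where "I s = integral {0..s} (\<lambda>r. exp (c * r) * h r)" for s
  \<comment> \<open>integrating factor: \<phi> is nonincreasing\<close>
  define \<phi> where "\<phi> s = exp (c * s) * Z s - I s" for s
  have "\<phi> t \<le> \<phi> 0"
  proof (rule DERIV_nonpos_imp_decreasing_open[OF t])
    show "continuous_on {0..t} \<phi>"
      unfolding \<phi>_def I_def by (intro continuous_intros Z indefinite_integral_continuous_1
          integrable_continuous_interval eh)
    fix s assume s: "0 < s" "s < t"
    have "(I has_real_derivative exp (c * s) * h s) (at s)"
      using integral_has_real_derivative[OF eh, of s] s at_within_interior[of s "{0..t}"]
      by (simp add: I_def[abs_def])
    then have "(\<phi> has_real_derivative exp (c * s) * (c * Z s + Z' s - h s)) (at s)"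
      unfolding \<phi>_def[abs_def] using Z'[OF s]
      by (auto intro!: derivative_eq_intros simp: algebra_simps)
    moreover have "exp (c * s) * (c * Z s + Z' s - h s) \<le> 0"
      using ineq[OF s] by (simp add: mult_nonneg_nonpos)
    ultimately show "\<exists>y. (\<phi> has_real_derivative y) (at s) \<and> y \<le> 0"
      by blast
  qed
  then have "exp (c * t) * Z t \<le> Z 0 + I t"
    by (simp add: \<phi>_def I_def)
  also have "I t \<le> integral {0..t} (\<lambda>r. exp (c * t) * h r)"
    unfolding I_def
  proof (rule integral_le)
    show "(\<lambda>r. exp (c * r) * h r) integrable_on {0..t}"
      by (rule integrable_continuous_interval[OF eh])
    show "(\<lambda>r. exp (c * t) * h r) integrable_on {0..t}"
      by (intro integrable_continuous_interval continuous_intros h)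
    show "exp (c * r) * h r \<le> exp (c * t) * h r" if "r \<in> {0..t}" for r
      using that c h_nonneg[OF that] by (intro mult_right_mono) (auto intro: mult_left_mono)
  qed
  also have "\<dots> = exp (c * t) * integral {0..t} h"
    by simp
  finally have "exp (- c * t) * (exp (c * t) * Z t) \<le> exp (- c * t) * (Z 0 + exp (c * t) * integral {0..t} h)"
    by simp
  then show ?thesis
    by (simp add: distrib_left mult.assoc[symmetric] exp_add[symmetric])
qed

lemma has_real_derivative_norm_squared_indefinite_integral:
  fixes G :: "real \<Rightarrow> 'a::euclidean_space"
  assumes G: "continuous_on {0..t} G" and s: "0 < s" "s < t"
  shows "((\<lambda>u. (norm (x + integral {0..u} G))\<^sup>2) has_real_derivative 2 * inner (G s) (x + integral {0..s} G)) (at s)"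
proof -
  have "((\<lambda>u. integral {0..u} G) has_vector_derivative G s) (at s)"
    using integral_has_vector_derivative[OF G, of s] s at_within_interior[of s "{0..t}"] by simp
  then have "((\<lambda>u. x + integral {0..u} G) has_derivative (\<lambda>d. d *\<^sub>R G s)) (at s)"
    using has_vector_derivative_add[OF has_vector_derivative_const[of x]]
    unfolding has_vector_derivative_def by fastforce
  from has_derivative_inner[OF this this] show ?thesis
    unfolding has_field_derivative_def power2_norm_eq_inner
    by (rule has_derivative_eq_rhs) (auto simp: fun_eq_iff inner_commute algebra_simps)
qed

lemma norm_squared_integral_solution_le:
  fixes b :: "'a::euclidean_space \<Rightarrow> 'a" and w Y :: "real \<Rightarrow> 'a"
  assumes lip: "L-lipschitz_on UNIV b"
    and dissip: "\<And>x. inner (b x) x \<le> R1 - R2 * (norm x)\<^sup>2" and R2: "0 < R2"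
    and w: "continuous_on {0..} w" and Y: "continuous_on {0..} Y"
    and eq: "\<And>s. 0 \<le> s \<Longrightarrow> Y s = x + integral {0..s} (\<lambda>r. b (Y r + w r))" and t: "0 \<le> t"
  shows "(norm (Y t))\<^sup>2 \<le> exp (- (R2 / 2) * t) * (norm x)\<^sup>2
      + integral {0..t} (\<lambda>r. (2 * \<bar>R1\<bar> + norm (b 0)) + (R2 + norm (b 0) + L\<^sup>2 / R2) * (norm (w r))\<^sup>2)"
proof -
  define G where "G r = b (Y r + w r)" for r
  define Z where "Z s = (norm (x + integral {0..s} G))\<^sup>2" for s
  have G: "continuous_on {0..t} G"
    unfolding G_def using t
    by (intro continuous_on_compose2[OF lipschitz_on_continuous_on[OF lip]] continuous_on_add
        continuous_on_subset[OF Y] continuous_on_subset[OF w]) auto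
  have Z_eq: "Z s = (norm (Y s))\<^sup>2" if "0 \<le> s" for s
    using eq[OF that] by (simp add: Z_def G_def[abs_def])
  have "Z t \<le> exp (- (R2 / 2) * t) * Z 0
      + integral {0..t} (\<lambda>r. (2 * \<bar>R1\<bar> + norm (b 0)) + (R2 + norm (b 0) + L\<^sup>2 / R2) * (norm (w r))\<^sup>2)"
  proof (rule linear_differential_inequality[OF t])
    show "continuous_on {0..t} Z"
      unfolding Z_def by (intro continuous_intros indefinite_integral_continuous_1 integrable_continuous_interval G)
    show "continuous_on {0..t} (\<lambda>r. (2 * \<bar>R1\<bar> + norm (b 0)) + (R2 + norm (b 0) + L\<^sup>2 / R2) * (norm (w r))\<^sup>2)"
      using t by (intro continuous_intros continuous_on_subset[OF w]) auto
    show "0 \<le> (2 * \<bar>R1\<bar> + norm (b 0)) + (R2 + norm (b 0) + L\<^sup>2 / R2) * (norm (w r))\<^sup>2" for r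
      using R2 by simp
    show "0 \<le> R2 / 2"
      using R2 by simp
    fix s assume s: "0 < s" "s < t"
    have "(Z has_real_derivative 2 * inner (G s) (x + integral {0..s} G)) (at s)"
      unfolding Z_def[abs_def] using G s by (rule has_real_derivative_norm_squared_indefinite_integral)
    then show "(Z has_real_derivative 2 * inner (G s) (Y s)) (at s)"
      using eq[of s] s by (simp add: G_def[abs_def])
    have "2 * inner (G s) (Y s) \<le> - (R2 / 2) * (norm (Y s))\<^sup>2
           + (2 * \<bar>R1\<bar> + norm (b 0)) + (R2 + norm (b 0) + L\<^sup>2 / R2) * (norm (w s))\<^sup>2"
      using dissipative_inner_bound[OF lip dissip R2, of "Y s + w s" "w s"] by (simp add: G_def)
    then show "2 * inner (G s) (Y s) \<le> - (R2 / 2) * Z s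
           + ((2 * \<bar>R1\<bar> + norm (b 0)) + (R2 + norm (b 0) + L\<^sup>2 / R2) * (norm (w s))\<^sup>2)"
      using s by (simp add: Z_eq)
  qed
  then show ?thesis
    using Z_eq[OF t] by (simp add: Z_def)
qed

section \<open>Second moments of Brownian motion\<close>

lemma gauss_density_mult_norm_squared_le:
  fixes z :: "'a::euclidean_space"
  assumes s: "0 < s"
  shows "gauss_density s z * (norm z)\<^sup>2 \<le> 4 * s * 2 powr (DIM('a) / 2) * gauss_density (2 * s) z"
proof -
  define d where "d = real DIM('a)"
  define v where "v = (norm z)\<^sup>2 / (4 * s)"
  have v: "v \<le> exp v"
    using exp_ge_add_one_self[of v] by linarith
  have "(norm z)\<^sup>2 = 4 * s * v"
    using s by (simp add: v_def)
  also have "\<dots> \<le> 4 * s * exp v"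
    using s v by simp
  finally have sq: "(norm z)\<^sup>2 * exp (- v) \<le> 4 * s"
    by (simp add: exp_minus field_simps)
  have scale: "(2 * pi * s) powr (- d / 2) = 2 powr (d / 2) * (2 * pi * (2 * s)) powr (- d / 2)"
    using s by (simp add: powr_mult powr_minus field_simps flip: powr_add)
  have "gauss_density s z * (norm z)\<^sup>2
      = (2 * pi * s) powr (- d / 2) * exp (- v) * ((norm z)\<^sup>2 * exp (- v))"
    unfolding gauss_density_def d_def[symmetric] v_def by (simp add: mult_exp_exp field_simps)
  also have "\<dots> \<le> (2 * pi * s) powr (- d / 2) * exp (- v) * (4 * s)"
    using sq by (intro mult_left_mono) auto
  also have "\<dots> = 4 * s * 2 powr (d / 2) * gauss_density (2 * s) z"
    unfolding scale gauss_density_def d_def[symmetric] v_def by (simp add: field_simps)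
  finally show ?thesis
    by (simp add: d_def)
qed

lemma brownian_motion_second_moment_le:
  fixes W :: "real \<Rightarrow> 'b \<Rightarrow> 'a::euclidean_space"
  assumes BM: "brownian_motion M W" and s: "0 \<le> s"
  shows "(\<integral>\<^sup>+\<omega>. ennreal ((norm (W s \<omega>))\<^sup>2) \<partial>M) \<le> ennreal (4 * s * 2 powr (DIM('a) / 2))"
proof (cases "s = 0")
  case True
  then have "(\<integral>\<^sup>+\<omega>. ennreal ((norm (W s \<omega>))\<^sup>2) \<partial>M) = (\<integral>\<^sup>+\<omega>. 0 \<partial>M)"
    using BM by (intro nn_integral_cong) (simp add: brownian_motion_def)
  then show ?thesis
    by simp
next
  case False
  with s have s: "0 < s"
    by simp
  have W0: "\<And>\<omega>. \<omega> \<in> space M \<Longrightarrow> W 0 \<omega> = 0" and "prob_space M"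
    using BM by (simp_all add: brownian_motion_def)
  have "distributed M lborel (\<lambda>\<omega>. W r \<omega> - W 0 \<omega>) (\<lambda>z. ennreal (gauss_density (r - 0) z))" if "0 < r" for r
    using BM that unfolding brownian_motion_def by blast
  then have increments: "distributed M lborel (\<lambda>\<omega>. W r \<omega> - W 0 \<omega>) (\<lambda>z. ennreal (gauss_density r z))"
    if "0 < r" for r
    using that by simp
  define C where "C = 4 * s * 2 powr (DIM('a) / 2)"
  have "(\<integral>\<^sup>+\<omega>. ennreal ((norm (W s \<omega>))\<^sup>2) \<partial>M) = (\<integral>\<^sup>+\<omega>. ennreal ((norm (W s \<omega> - W 0 \<omega>))\<^sup>2) \<partial>M)"
    using W0 by (intro nn_integral_cong) simp
  also have "\<dots> = (\<integral>\<^sup>+(z::'a). ennreal (gauss_density s z) * ennreal ((norm z)\<^sup>2) \<partial>lborel)"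
    by (subst distributed_nn_integral[OF increments[OF s]]) auto
  also have "\<dots> \<le> (\<integral>\<^sup>+(z::'a). ennreal C * ennreal (gauss_density (2 * s) z) \<partial>lborel)"
    using gauss_density_mult_norm_squared_le[OF s] s
    by (intro nn_integral_mono) (simp add: C_def gauss_density_def ennreal_mult[symmetric])
  also have "\<dots> = ennreal C * (\<integral>\<^sup>+\<omega>. 1 \<partial>M)"
    using distributed_nn_integral[OF increments, of "2 * s" "\<lambda>_. 1"] s
      distributed_borel_measurable[OF increments, of "2 * s"]
    by (simp add: nn_integral_cmult)
  also have "\<dots> = ennreal C"
    using prob_space.emeasure_space_1[OF \<open>prob_space M\<close>] by simp
  finally show ?thesis
    by (simp add: C_def)
qed

lemma floor_mult_div_LIMSEQ: "(\<lambda>n. \<lfloor>real (Suc n) * s\<rfloor> / real (Suc n)) \<longlonglongrightarrow> s"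
proof (rule tendsto_sandwich[where f = "\<lambda>n. s - inverse (real (Suc n))" and h = "\<lambda>n. s"])
  have "s - inverse (real (Suc n)) \<le> \<lfloor>real (Suc n) * s\<rfloor> / real (Suc n)" for n
  proof -
    have "real (Suc n) * s - 1 \<le> \<lfloor>real (Suc n) * s\<rfloor>"
      by linarith
    then have "(real (Suc n) * s - 1) / real (Suc n) \<le> \<lfloor>real (Suc n) * s\<rfloor> / real (Suc n)"
      by (intro divide_right_mono) auto
    moreover have "s - inverse (real (Suc n)) = (real (Suc n) * s - 1) / real (Suc n)"
      by (simp add: field_simps)
    ultimately show ?thesis
      by simp
  qed
  then show "\<forall>\<^sub>F n in sequentially. s - inverse (real (Suc n)) \<le> \<lfloor>real (Suc n) * s\<rfloor> / real (Suc n)"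
    by simp
  have "\<lfloor>real (Suc n) * s\<rfloor> / real (Suc n) \<le> s" for n
  proof -
    have "\<lfloor>real (Suc n) * s\<rfloor> \<le> real (Suc n) * s"
      by linarith
    then show ?thesis
      by (simp add: field_simps)
  qed
  then show "\<forall>\<^sub>F n in sequentially. \<lfloor>real (Suc n) * s\<rfloor> / real (Suc n) \<le> s"
    by simp
  show "(\<lambda>n. s - inverse (real (Suc n))) \<longlonglongrightarrow> s"
    using tendsto_diff[OF tendsto_const LIMSEQ_inverse_real_of_nat] by simp
qed simp

text \<open>The process is frozen at time 0 for negative times; it is the pointwise limit of the
  processes sampled on the grids \<open>\<int> / (n + 1)\<close>, which are measurable as countable combinations.\<close>

lemma borel_measurable_continuous_process:
  fixes W :: "real \<Rightarrow> 'b \<Rightarrow> 'a::euclidean_space"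
  assumes W: "\<And>t. W t \<in> borel_measurable M"
    and W_cont: "\<And>\<omega>. \<omega> \<in> space M \<Longrightarrow> continuous_on {0..} (\<lambda>t. W t \<omega>)"
  shows "(\<lambda>p. W (max 0 (fst p)) (snd p)) \<in> borel_measurable (lborel \<Otimes>\<^sub>M M)"
proof (rule borel_measurable_LIMSEQ_metric)
  fix n :: nat
  show "(\<lambda>p. W (max 0 (\<lfloor>real (Suc n) * fst p\<rfloor> / real (Suc n))) (snd p)) \<in> borel_measurable (lborel \<Otimes>\<^sub>M M)"
  proof (rule measurable_compose_countable[where f = "\<lambda>i p. W (max 0 (i / real (Suc n))) (snd p)"])
    show "(\<lambda>p. W (max 0 (real_of_int i / real (Suc n))) (snd p)) \<in> borel_measurable (lborel \<Otimes>\<^sub>M M)" for i :: int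
      using W by measurable
    show "(\<lambda>p. \<lfloor>real (Suc n) * fst p\<rfloor>) \<in> measurable (lborel \<Otimes>\<^sub>M M) (count_space UNIV)"
      by measurable
  qed
next
  fix p :: "real \<times> 'b" assume "p \<in> space (lborel \<Otimes>\<^sub>M M)"
  then have "snd p \<in> space M"
    by (auto simp: space_pair_measure)
  moreover have "(\<lambda>n. max 0 (\<lfloor>real (Suc n) * fst p\<rfloor> / real (Suc n))) \<longlonglongrightarrow> max 0 (fst p)"
    by (intro tendsto_max tendsto_const floor_mult_div_LIMSEQ)
  ultimately show "(\<lambda>n. W (max 0 (\<lfloor>real (Suc n) * fst p\<rfloor> / real (Suc n))) (snd p)) \<longlonglongrightarrow> W (max 0 (fst p)) (snd p)"
    using W_cont by (intro continuous_on_tendsto_compose[OF W_cont]) auto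
qed

lemma nn_integral_brownian_quadratic_le:
  fixes W :: "real \<Rightarrow> 'b \<Rightarrow> 'a::euclidean_space"
  assumes BM: "brownian_motion M W" and r: "0 \<le> r" "r \<le> t" and K: "0 \<le> K1" "0 \<le> K2"
  shows "(\<integral>\<^sup>+\<omega>. ennreal (K1 + K2 * (norm (W r \<omega>))\<^sup>2) \<partial>M) \<le> ennreal (K1 + K2 * (4 * t * 2 powr (DIM('a) / 2)))"
proof -
  interpret M: prob_space M
    using BM by (simp add: brownian_motion_def)
  have [measurable]: "W r \<in> borel_measurable M"
    using BM by (simp add: brownian_motion_def)
  have "(\<integral>\<^sup>+\<omega>. ennreal (K1 + K2 * (norm (W r \<omega>))\<^sup>2) \<partial>M)
      = (\<integral>\<^sup>+\<omega>. ennreal K1 + ennreal K2 * ennreal ((norm (W r \<omega>))\<^sup>2) \<partial>M)"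
    using K by (intro nn_integral_cong) (simp add: ennreal_mult ennreal_plus)
  also have "\<dots> = ennreal K1 + ennreal K2 * (\<integral>\<^sup>+\<omega>. ennreal ((norm (W r \<omega>))\<^sup>2) \<partial>M)"
    by (simp add: nn_integral_add nn_integral_cmult M.emeasure_space_1)
  also have "\<dots> \<le> ennreal K1 + ennreal K2 * ennreal (4 * t * 2 powr (DIM('a) / 2))"
  proof -
    have "(\<integral>\<^sup>+\<omega>. ennreal ((norm (W r \<omega>))\<^sup>2) \<partial>M) \<le> ennreal (4 * r * 2 powr (DIM('a) / 2))"
      using BM r(1) by (rule brownian_motion_second_moment_le)
    also have "\<dots> \<le> ennreal (4 * t * 2 powr (DIM('a) / 2))"
      using r by (intro ennreal_leI mult_right_mono) auto
    finally show ?thesis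
      by (intro add_left_mono mult_left_mono) auto
  qed
  also have "\<dots> = ennreal (K1 + K2 * (4 * t * 2 powr (DIM('a) / 2)))"
    using K r by (simp add: ennreal_mult[symmetric] ennreal_plus[symmetric] del: ennreal_plus)
  finally show ?thesis .
qed

lemma ennreal_integral_path_energy:
  fixes w :: "real \<Rightarrow> 'a::euclidean_space"
  assumes w: "continuous_on {0..} w" and K: "0 \<le> K1" "0 \<le> K2"
  shows "ennreal (integral {0..t} (\<lambda>r. K1 + K2 * (norm (w r))\<^sup>2))
           = (\<integral>\<^sup>+r. ennreal (K1 + K2 * (norm (w (max 0 r)))\<^sup>2) * indicator {0..t} r \<partial>lborel)"
proof -
  have "continuous_on {0..t} (\<lambda>r. K1 + K2 * (norm (w (max 0 r)))\<^sup>2)"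
    by (intro continuous_intros continuous_on_compose2[OF w]) auto
  then have "((\<lambda>r. K1 + K2 * (norm (w (max 0 r)))\<^sup>2) has_integral integral {0..t} (\<lambda>r. K1 + K2 * (norm (w r))\<^sup>2)) {0..t}"
    by (subst integral_cong[where g = "\<lambda>r. K1 + K2 * (norm (w (max 0 r)))\<^sup>2"])
      (auto intro: integrable_integral integrable_continuous_interval)
  then show ?thesis
    using K by (subst nn_integral_has_integral_lebesgue') auto
qed

lemma
  fixes W :: "real \<Rightarrow> 'b \<Rightarrow> 'a::euclidean_space"
  assumes BM: "brownian_motion M W" and t: "0 \<le> t" and K: "0 \<le> K1" "0 \<le> K2"
  shows borel_measurable_brownian_energy:
      "(\<lambda>\<omega>. ennreal (integral {0..t} (\<lambda>r. K1 + K2 * (norm (W r \<omega>))\<^sup>2))) \<in> borel_measurable M"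
    and nn_integral_brownian_energy_le:
      "(\<integral>\<^sup>+\<omega>. ennreal (integral {0..t} (\<lambda>r. K1 + K2 * (norm (W r \<omega>))\<^sup>2)) \<partial>M)
         \<le> ennreal (t * (K1 + K2 * (4 * t * 2 powr (DIM('a) / 2))))"
proof -
  interpret M: prob_space M
    using BM by (simp add: brownian_motion_def)
  interpret pair_sigma_finite lborel M ..
  define C where "C = 4 * t * 2 powr (DIM('a) / 2)"
  have C: "0 \<le> C"
    using t by (simp add: C_def)
  define H where "H r \<omega> = ennreal (K1 + K2 * (norm (W (max 0 r) \<omega>))\<^sup>2) * indicator {0..t} r" for r \<omega>
  have [measurable]: "W r \<in> borel_measurable M" for r
    using BM by (simp add: brownian_motion_def)
  have W_cont: "continuous_on {0..} (\<lambda>r. W r \<omega>)" if "\<omega> \<in> space M" for \<omega>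
    using BM that by (simp add: brownian_motion_def)
  have [measurable]: "(\<lambda>p. W (max 0 (fst p)) (snd p)) \<in> borel_measurable (lborel \<Otimes>\<^sub>M M)"
    using W_cont by (intro borel_measurable_continuous_process) measurable
  have H: "(\<lambda>(r, \<omega>). H r \<omega>) \<in> borel_measurable (lborel \<Otimes>\<^sub>M M)"
    unfolding H_def case_prod_beta by measurable
  have energy_eq: "ennreal (integral {0..t} (\<lambda>r. K1 + K2 * (norm (W r \<omega>))\<^sup>2)) = (\<integral>\<^sup>+r. H r \<omega> \<partial>lborel)"
    if "\<omega> \<in> space M" for \<omega>
    unfolding H_def using W_cont[OF that] K by (rule ennreal_integral_path_energy)
  have "(\<lambda>\<omega>. \<integral>\<^sup>+r. H r \<omega> \<partial>lborel) \<in> borel_measurable M"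
    using measurable_pair_swap[OF H] by (intro lborel.borel_measurable_nn_integral) (simp add: case_prod_beta)
  then show "(\<lambda>\<omega>. ennreal (integral {0..t} (\<lambda>r. K1 + K2 * (norm (W r \<omega>))\<^sup>2))) \<in> borel_measurable M"
    by (rule measurable_cong[THEN iffD2, rotated]) (simp add: energy_eq)
  have "(\<integral>\<^sup>+\<omega>. ennreal (integral {0..t} (\<lambda>r. K1 + K2 * (norm (W r \<omega>))\<^sup>2)) \<partial>M)
      = (\<integral>\<^sup>+r. (\<integral>\<^sup>+\<omega>. H r \<omega> \<partial>M) \<partial>lborel)"
    using Fubini'[OF H] by (simp add: energy_eq cong: nn_integral_cong)
  also have "\<dots> \<le> (\<integral>\<^sup>+r. ennreal (K1 + K2 * C) * indicator {0..t} r \<partial>lborel)"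
  proof (intro nn_integral_mono)
    fix r :: real
    show "(\<integral>\<^sup>+\<omega>. H r \<omega> \<partial>M) \<le> ennreal (K1 + K2 * C) * indicator {0..t} r"
      using nn_integral_brownian_quadratic_le[OF BM _ _ K, of r t] by (cases "r \<in> {0..t}") (simp_all add: H_def C_def)
  qed
  also have "\<dots> = ennreal (K1 + K2 * C) * ennreal t"
    using t by (subst nn_integral_cmult_indicator) auto
  also have "\<dots> = ennreal (t * (K1 + K2 * C))"
    using t K C by (subst ennreal_mult) (auto simp: mult.commute)
  finally show "(\<integral>\<^sup>+\<omega>. ennreal (integral {0..t} (\<lambda>r. K1 + K2 * (norm (W r \<omega>))\<^sup>2)) \<partial>M)
                  \<le> ennreal (t * (K1 + K2 * (4 * t * 2 powr (DIM('a) / 2))))"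
    by (simp add: C_def)
qed

section \<open>Second moments of the SDE and the transfer operator\<close>

lemma sde_solution_exists:
  fixes b :: "'a::euclidean_space \<Rightarrow> 'a" and W :: "real \<Rightarrow> 'b \<Rightarrow> 'a"
  assumes lip: "L-lipschitz_on UNIV b" and BM: "brownian_motion M W"
  obtains X where "sde_solution M W b x X"
proof -
  have W_cont: "continuous_on {0..} (\<lambda>s. W s \<omega>)" if "\<omega> \<in> space M" for \<omega>
    using BM that by (simp add: brownian_motion_def)
  have "\<forall>\<omega>\<in>space M. \<exists>Y. continuous_on {0..} Y \<and> (\<forall>s\<ge>0. Y s = x + integral {0..s} (\<lambda>r. b (Y r + W r \<omega>)))"
    using integral_equation_solution_exists[OF lip W_cont] by metis
  then obtain Y where Y: "\<And>\<omega>. \<omega> \<in> space M \<Longrightarrow>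
      continuous_on {0..} (Y \<omega>) \<and> (\<forall>s\<ge>0. Y \<omega> s = x + integral {0..s} (\<lambda>r. b (Y \<omega> r + W r \<omega>)))"
    by metis
  have "sde_solution M W b x (\<lambda>s \<omega>. Y \<omega> s + W s \<omega>)"
    unfolding sde_solution_def using Y W_cont by (auto intro: continuous_on_add)
  then show thesis ..
qed

lemma sde_solution_second_moment_pathwise_le:
  fixes b :: "'a::euclidean_space \<Rightarrow> 'a" and W :: "real \<Rightarrow> 'b \<Rightarrow> 'a"
  assumes lip: "L-lipschitz_on UNIV b"
    and dissip: "\<And>x. inner (b x) x \<le> R1 - R2 * (norm x)\<^sup>2" and R2: "0 < R2"
    and BM: "brownian_motion M W" and X: "sde_solution M W b x X"
    and \<omega>: "\<omega> \<in> space M" and t: "0 \<le> t" and e: "0 < e"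
  defines "a \<equiv> (1 + e) * exp (- (R2 / 2) * t)"
    and "J \<equiv> integral {0..t} (\<lambda>r. (2 * \<bar>R1\<bar> + norm (b 0)) + (R2 + norm (b 0) + L\<^sup>2 / R2) * (norm (W r \<omega>))\<^sup>2)"
  shows "ennreal (1 + (norm (X t \<omega>))\<^sup>2)
           \<le> ennreal (a * (1 + (norm x)\<^sup>2) + 1) + ennreal (1 + 1 / e) * ennreal ((norm (W t \<omega>))\<^sup>2)
             + ennreal (1 + e) * ennreal J"
proof -
  have J: "0 \<le> J"
    unfolding J_def using R2
    by (cases "(\<lambda>r. (2 * \<bar>R1\<bar> + norm (b 0)) + (R2 + norm (b 0) + L\<^sup>2 / R2) * (norm (W r \<omega>))\<^sup>2) integrable_on {0..t}")
      (auto intro: integral_nonneg simp: not_integrable_integral)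
  have W_cont: "continuous_on {0..} (\<lambda>s. W s \<omega>)"
    using BM \<omega> by (simp add: brownian_motion_def)
  have X_cont: "continuous_on {0..} (\<lambda>s. X s \<omega>)" and
    X_eq: "\<And>s. 0 \<le> s \<Longrightarrow> X s \<omega> - W s \<omega> = x + integral {0..s} (\<lambda>r. b ((X r \<omega> - W r \<omega>) + W r \<omega>))"
    using X \<omega> by (simp_all add: sde_solution_def)
  have "(norm (X t \<omega> - W t \<omega>))\<^sup>2 \<le> exp (- (R2 / 2) * t) * (norm x)\<^sup>2 + J"
    unfolding J_def using X_eq t
    by (intro norm_squared_integral_solution_le[OF lip dissip R2 W_cont] continuous_on_diff X_cont W_cont) auto
  moreover have "(norm (X t \<omega>))\<^sup>2 \<le> (1 + e) * (norm (X t \<omega> - W t \<omega>))\<^sup>2 + (1 + 1 / e) * (norm (W t \<omega>))\<^sup>2"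
    using norm_add_squared_le[OF e, of "X t \<omega> - W t \<omega>" "W t \<omega>"] by simp
  moreover have "0 \<le> a"
    using e by (simp add: a_def)
  ultimately have "1 + (norm (X t \<omega>))\<^sup>2 \<le> (a * (1 + (norm x)\<^sup>2) + 1) + (1 + 1 / e) * (norm (W t \<omega>))\<^sup>2 + (1 + e) * J"
    using e unfolding a_def by (smt (verit) distrib_left mult.assoc mult_left_mono)
  then have "ennreal (1 + (norm (X t \<omega>))\<^sup>2)
      \<le> ennreal ((a * (1 + (norm x)\<^sup>2) + 1) + (1 + 1 / e) * (norm (W t \<omega>))\<^sup>2 + (1 + e) * J)"
    by (rule ennreal_leI)
  also have "ennreal ((a * (1 + (norm x)\<^sup>2) + 1) + (1 + 1 / e) * (norm (W t \<omega>))\<^sup>2 + (1 + e) * J)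
      = ennreal (a * (1 + (norm x)\<^sup>2) + 1) + ennreal (1 + 1 / e) * ennreal ((norm (W t \<omega>))\<^sup>2)
        + ennreal (1 + e) * ennreal J"
    using e J by (simp add: a_def ennreal_plus ennreal_mult)
  finally show ?thesis .
qed

lemma sde_solution_second_moment_le:
  fixes b :: "'a::euclidean_space \<Rightarrow> 'a" and W :: "real \<Rightarrow> 'b \<Rightarrow> 'a"
  assumes lip: "L-lipschitz_on UNIV b"
    and dissip: "\<And>x. inner (b x) x \<le> R1 - R2 * (norm x)\<^sup>2" and R2: "0 < R2"
    and BM: "brownian_motion M W" and X: "sde_solution M W b x X" and t: "0 \<le> t" and e: "0 < e"
  defines "a \<equiv> (1 + e) * exp (- (R2 / 2) * t)"
    and "K1 \<equiv> 2 * \<bar>R1\<bar> + norm (b 0)" and "K2 \<equiv> R2 + norm (b 0) + L\<^sup>2 / R2"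
    and "C \<equiv> 4 * t * 2 powr (DIM('a) / 2)"
  shows "(\<integral>\<^sup>+\<omega>. ennreal (1 + (norm (X t \<omega>))\<^sup>2) \<partial>M)
           \<le> ennreal a * ennreal (1 + (norm x)\<^sup>2) + ennreal (1 + (1 + 1 / e) * C + (1 + e) * (t * (K1 + K2 * C)))"
proof -
  interpret M: prob_space M
    using BM by (simp add: brownian_motion_def)
  have [measurable]: "W t \<in> borel_measurable M"
    using BM by (simp add: brownian_motion_def)
  have K: "0 \<le> K1" "0 \<le> K2" and C: "0 \<le> C" and a: "0 \<le> a"
    using R2 t e by (auto simp: K1_def K2_def C_def a_def)
  define E where "E \<omega> = ennreal (integral {0..t} (\<lambda>r. K1 + K2 * (norm (W r \<omega>))\<^sup>2))" for \<omega>
  have E: "E \<in> borel_measurable M" "(\<integral>\<^sup>+\<omega>. E \<omega> \<partial>M) \<le> ennreal (t * (K1 + K2 * C))"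
    unfolding E_def C_def using BM t K
    by (auto intro: borel_measurable_brownian_energy nn_integral_brownian_energy_le)
  have "(\<integral>\<^sup>+\<omega>. ennreal (1 + (norm (X t \<omega>))\<^sup>2) \<partial>M)
      \<le> (\<integral>\<^sup>+\<omega>. ennreal (a * (1 + (norm x)\<^sup>2) + 1) + ennreal (1 + 1 / e) * ennreal ((norm (W t \<omega>))\<^sup>2)
            + ennreal (1 + e) * E \<omega> \<partial>M)"
    unfolding a_def E_def K1_def K2_def
    by (intro nn_integral_mono sde_solution_second_moment_pathwise_le[OF lip dissip R2 BM X _ t e]) simp
  also have "\<dots> = ennreal (a * (1 + (norm x)\<^sup>2) + 1)
        + ennreal (1 + 1 / e) * (\<integral>\<^sup>+\<omega>. ennreal ((norm (W t \<omega>))\<^sup>2) \<partial>M) + ennreal (1 + e) * (\<integral>\<^sup>+\<omega>. E \<omega> \<partial>M)"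
    using E(1) by (simp add: nn_integral_add nn_integral_cmult M.emeasure_space_1)
  also have "\<dots> \<le> ennreal (a * (1 + (norm x)\<^sup>2) + 1) + ennreal (1 + 1 / e) * ennreal C
        + ennreal (1 + e) * ennreal (t * (K1 + K2 * C))"
    using brownian_motion_second_moment_le[OF BM t] E(2)
    by (intro add_mono mult_left_mono order.refl) (simp_all add: C_def)
  also have "\<dots> = ennreal a * ennreal (1 + (norm x)\<^sup>2) + ennreal (1 + (1 + 1 / e) * C + (1 + e) * (t * (K1 + K2 * C)))"
    using a e t K C by (simp add: ennreal_mult[symmetric] ennreal_plus[symmetric] add.assoc del: ennreal_plus)
  finally show ?thesis .
qed

lemma sde_solution_second_moment_contraction:
  fixes b :: "'a::euclidean_space \<Rightarrow> 'a" and W :: "real \<Rightarrow> 'b \<Rightarrow> 'a"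
  assumes lip: "L-lipschitz_on UNIV b"
    and dissip: "\<And>x. inner (b x) x \<le> R1 - R2 * (norm x)\<^sup>2" and R2: "0 < R2"
    and BM: "brownian_motion M W" and t: "0 < t"
  obtains a c where "0 \<le> a" "a < 1" "0 \<le> c"
    "\<And>x X. sde_solution M W b x X \<Longrightarrow>
       (\<integral>\<^sup>+\<omega>. ennreal (1 + (norm (X t \<omega>))\<^sup>2) \<partial>M) \<le> ennreal a * ennreal (1 + (norm x)\<^sup>2) + ennreal c"
proof -
  define q where "q = exp (- (R2 / 2) * t)"
  have q: "0 < q" "q < 1"
    using R2 t by (auto simp: q_def)
  \<comment> \<open>chosen such that (1 + e) q = (1 + q) / 2\<close>
  define e where "e = (1 - q) / (2 * q)"
  have e: "0 < e" and a: "(1 + e) * q < 1"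
    using q by (auto simp: e_def field_simps)
  define C where "C = 4 * t * 2 powr (DIM('a) / 2)"
  define c where "c = 1 + (1 + 1 / e) * C + (1 + e) * (t * ((2 * \<bar>R1\<bar> + norm (b 0)) + (R2 + norm (b 0) + L\<^sup>2 / R2) * C))"
  show thesis
  proof (rule that)
    show "0 \<le> (1 + e) * q" "(1 + e) * q < 1" "0 \<le> c"
      using q e a t R2 by (simp_all add: c_def C_def)
    show "(\<integral>\<^sup>+\<omega>. ennreal (1 + (norm (X t \<omega>))\<^sup>2) \<partial>M) \<le> ennreal ((1 + e) * q) * ennreal (1 + (norm x)\<^sup>2) + ennreal c"
      if "sde_solution M W b x X" for x X
      using sde_solution_second_moment_le[OF lip dissip R2 BM that _ e] t unfolding q_def c_def C_def by simp
  qed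
qed

lemma transition_density_Lyapunov_bound:
  fixes b :: "'a::euclidean_space \<Rightarrow> 'a" and W :: "real \<Rightarrow> 'b \<Rightarrow> 'a" and S :: "'a \<Rightarrow> 'a \<Rightarrow> real"
  assumes lip: "L-lipschitz_on UNIV b"
    and dissip: "\<And>x. inner (b x) x \<le> R1 - R2 * (norm x)\<^sup>2" and R2: "0 < R2"
    and BM: "brownian_motion M W" and t: "0 < t"
    and S_density: "\<And>x X. sde_solution M W b x X \<Longrightarrow> distributed M lborel (X t) (\<lambda>y. ennreal (S x y))"
  obtains a c where "0 \<le> a" "a < 1" "0 \<le> c"
    "\<And>x. (\<integral>\<^sup>+y. ennreal (S x y) \<partial>lborel) \<le> 1"
    "\<And>x. (\<integral>\<^sup>+y. ennreal (S x y) * ennreal (1 + (norm y)\<^sup>2) \<partial>lborel)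
            \<le> ennreal a * ennreal (1 + (norm x)\<^sup>2) + ennreal c"
proof -
  interpret M: prob_space M
    using BM by (simp add: brownian_motion_def)
  obtain a c where a: "0 \<le> a" "a < 1" and c: "0 \<le> c" and moment: "\<And>x X. sde_solution M W b x X \<Longrightarrow>
      (\<integral>\<^sup>+\<omega>. ennreal (1 + (norm (X t \<omega>))\<^sup>2) \<partial>M) \<le> ennreal a * ennreal (1 + (norm x)\<^sup>2) + ennreal c"
    using sde_solution_second_moment_contraction[OF lip dissip R2 BM t] by blast
  show thesis
  proof (rule that[OF a c])
    fix x
    obtain X where X: "sde_solution M W b x X"
      using sde_solution_exists[OF lip BM] .
    note density = S_density[OF X]
    show "(\<integral>\<^sup>+y. ennreal (S x y) \<partial>lborel) \<le> 1"
      using distributed_nn_integral[OF density, of "\<lambda>_. 1"] M.emeasure_space_1 by simp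
    show "(\<integral>\<^sup>+y. ennreal (S x y) * ennreal (1 + (norm y)\<^sup>2) \<partial>lborel)
            \<le> ennreal a * ennreal (1 + (norm x)\<^sup>2) + ennreal c"
      using moment[OF X] by (subst distributed_nn_integral[OF density]) auto
  qed
qed

theorem proposition24:
  fixes b :: "'a::euclidean_space \<Rightarrow> 'a"
    and M :: "'b measure" and W :: "real \<Rightarrow> 'b \<Rightarrow> 'a"
    and S :: "'a \<Rightarrow> 'a \<Rightarrow> real"
    and t R1 R2 :: real and x0 :: 'a and u :: "nat \<Rightarrow> real"
  assumes lip: "\<exists>C. C-lipschitz_on UNIV b"
    and dissip: "\<forall>x. inner (b x) x \<le> R1 - R2 * (norm x)\<^sup>2" and R2: "R2 > 0"
    and BM: "brownian_motion M W"
    and t: "t > 0"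
    and S_meas: "(\<lambda>(x, y). S x y) \<in> borel_measurable borel"
    and S_nonneg: "\<forall>x y. S x y \<ge> 0"
    and S_density: "\<forall>x X. sde_solution M W b x X \<longrightarrow>
                      distributed M lborel (X t) (\<lambda>y. ennreal (S x y))"
    and u: "filterlim u at_top sequentially"
  shows "\<exists>lam A B. 0 \<le> lam \<and> lam < 1 \<and> A \<ge> 0 \<and> B \<ge> 0 \<and>
           (\<forall>f :: 'a \<Rightarrow> real. f \<in> borel_measurable lborel \<and> L12_norm f < \<infinity> \<longrightarrow>
              (\<forall>m n. m \<ge> 1 \<and> n \<ge> 1 \<longrightarrow>
                 L12_norm ((open_op S x0 u n ^^ m) f)
                   \<le> ennreal (A * lam ^ m) * L12_norm f + ennreal B * L1_norm f))"
proof -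
  obtain L where L: "L-lipschitz_on UNIV b"
    using lip by blast
  obtain a c where a: "0 \<le> a" "a < 1" and c: "0 \<le> c"
    and mass: "\<And>x. (\<integral>\<^sup>+y. ennreal (S x y) \<partial>lborel) \<le> 1"
    and drift: "\<And>x. (\<integral>\<^sup>+y. ennreal (S x y) * ennreal (1 + (norm y)\<^sup>2) \<partial>lborel)
                      \<le> ennreal a * ennreal (1 + (norm x)\<^sup>2) + ennreal c"
    using transition_density_Lyapunov_bound[OF L dissip[rule_format] R2 BM t] S_density by blast
  have "L12_norm ((open_op S x0 u n ^^ m) f) \<le> ennreal (1 * a ^ m) * L12_norm f + ennreal (c / (1 - a)) * L1_norm f"
    if "f \<in> borel_measurable lborel" for f :: "'a \<Rightarrow> real" and m n
    using L12_norm_open_op_power_le[OF S_meas _ mass drift a c] S_nonneg that by simp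
  then show ?thesis
    using a c by (intro exI[of _ a] exI[of _ 1] exI[of _ "c / (1 - a)"]) auto
qed

end
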